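(* Let $X$ be a real random variable taking values in the interval $\mathcal{I}\subseteq\mathbb{R}$, and let $h:\mathcal{I}\to\mathcal{J}$ have a non-decreasing upper tail with threshold $c\in(\inf\mathcal{I},\sup\mathcal{I})$. Let $h^{\star}=\sup_{x<c,\,x\in\mathcal{I}}h(x)$, $\pi_c=\mathbb{P}[h(X)\le h^{\star}]$, and define $\tilde h:\mathcal{I}\to\mathcal{J}$ by $\tilde h(x)=h^{\star}$ if $x<c$, $\tilde h(c)=\max\{h(c),h^{\star}\}$, and $\tilde h(x)=h(x)$ if $x>c$. Then $$\mathbb{P}[\tilde h(X)\le y]=\mathbb{P}[h(X)\le y]\quad\text{for all } y\ge h^{\star},$$ and in particular $\mathbb{P}[\tilde h(X)\le h^{\star}]=\pi_c$.
   Context: $\mathcal{I},\mathcal{J}\subseteq\mathbb{R}$, $h$ real-valued whose discontinuities (if any) are jumps at which it is left- or right-continuous. A function $h:\mathcal{I}\to\mathcal{J}$ has a non-decreasing upper tail if there exists $x'\in\mathcal{I}$ such that (1) $h(x)\le h(x')$ for all $x\in\mathcal{I}$ with $x<x'$, and (2) $h(x_1)\le h(x_2)$ for all $x_1,x_2\in\mathcal{I}$ with $x'\le x_1\le x_2$. Its threshold $c$ is the infimum of the (assumed nonempty) set of all such $x'$. *)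

theory Defs
  imports "HOL-Probability.Probability"
begin

definition jump_regular :: "real set \<Rightarrow> (real \<Rightarrow> real) \<Rightarrow> bool" where
  "jump_regular I h \<longleftrightarrow>
     (\<forall>x\<in>I. (\<exists>l. (h \<longlongrightarrow> l) (at x within (I \<inter> {..<x})))
          \<and> (\<exists>r. (h \<longlongrightarrow> r) (at x within (I \<inter> {x<..})))
          \<and> ((h \<longlongrightarrow> h x) (at x within (I \<inter> {..<x}))
             \<or> (h \<longlongrightarrow> h x) (at x within (I \<inter> {x<..}))))"

definition nondec_tail_point :: "real set \<Rightarrow> (real \<Rightarrow> real) \<Rightarrow> real \<Rightarrow> bool" where
  "nondec_tail_point I h x' \<longleftrightarrow> x' \<in> I
     \<and> (\<forall>x\<in>I. x < x' \<longrightarrow> h x \<le> h x')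
     \<and> (\<forall>x1\<in>I. \<forall>x2\<in>I. x' \<le> x1 \<and> x1 \<le> x2 \<longrightarrow> h x1 \<le> h x2)"

definition has_nondec_upper_tail :: "real set \<Rightarrow> (real \<Rightarrow> real) \<Rightarrow> bool" where
  "has_nondec_upper_tail I h \<longleftrightarrow> (\<exists>x'. nondec_tail_point I h x')"

definition tail_threshold :: "real set \<Rightarrow> (real \<Rightarrow> real) \<Rightarrow> real" where
  "tail_threshold I h = Inf {x'. nondec_tail_point I h x'}"

definition h_star :: "real set \<Rightarrow> (real \<Rightarrow> real) \<Rightarrow> real \<Rightarrow> real" where
  "h_star I h c = Sup (h ` {x\<in>I. x < c})"

definition h_tilde :: "real set \<Rightarrow> (real \<Rightarrow> real) \<Rightarrow> real \<Rightarrow> real \<Rightarrow> real" where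
  "h_tilde I h c x =
     (if x < c then h_star I h c else if x = c then max (h c) (h_star I h c) else h x)"

end

theory Submission
  imports Defs
begin

text \<open>Any point b beyond the threshold lies above some tail point s, and then h is bounded
  by h b on everything left of b. Hence h^* is a genuine supremum with h \<le> h^* left of c,
  so for y \<ge> h^* the events {h_tilde(X) \<le> y} and {h(X) \<le> y} are the same set.\<close>

lemma tail_point_less_than_above_threshold:
  assumes "has_nondec_upper_tail I h" and "tail_threshold I h < b"
  obtains s where "nondec_tail_point I h s" and "s < b"
proof -
  let ?S = "{x'. nondec_tail_point I h x'}"
  have "\<exists>s\<in>?S. s < b"
  proof (cases "bdd_below ?S")
    case True
    have "?S \<noteq> {}" using assms(1) unfolding has_nondec_upper_tail_def by blast
    then show ?thesis
      using assms(2) cInf_less_iff[OF _ True] unfolding tail_threshold_def by blast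
  next
    case False
    then show ?thesis unfolding bdd_below_def by (meson not_le)
  qed
  then show ?thesis using that by blast
qed

lemma nondec_tail_point_le_right:
  assumes "nondec_tail_point I h s" and "s < b" and "b \<in> I"
    and "x \<in> I" and "x < b"
  shows "h x \<le> h b"
proof (cases "x < s")
  case True
  then have "h x \<le> h s" using assms(1,4) unfolding nondec_tail_point_def by blast
  also have "h s \<le> h b" using assms(1-3) unfolding nondec_tail_point_def by auto
  finally show ?thesis .
next
  case False
  then show ?thesis using assms unfolding nondec_tail_point_def by auto
qed

lemma le_h_star_below_threshold:
  assumes "has_nondec_upper_tail I h" and "b \<in> I" and "tail_threshold I h < b"
    and "x \<in> I" and "x < tail_threshold I h"
  shows "h x \<le> h_star I h (tail_threshold I h)"
proof -
  obtain s where s: "nondec_tail_point I h s" and "s < b"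
    using tail_point_less_than_above_threshold assms(1,3) by blast
  have "h x' \<le> h b" if "x' \<in> I" and "x' < tail_threshold I h" for x'
    using nondec_tail_point_le_right[OF s \<open>s < b\<close> assms(2) that(1)] that(2) assms(3)
    by simp
  then have "bdd_above (h ` {x\<in>I. x < tail_threshold I h})"
    unfolding bdd_above_def by blast
  then show ?thesis
    unfolding h_star_def using assms(4,5) by (intro cSup_upper) auto
qed

lemma h_tilde_le_iff:
  assumes "\<And>x. x \<in> I \<Longrightarrow> x < c \<Longrightarrow> h x \<le> h_star I h c"
    and "h_star I h c \<le> y" and "x \<in> I"
  shows "h_tilde I h c x \<le> y \<longleftrightarrow> h x \<le> y"
  using assms unfolding h_tilde_def by (force simp: max_def)

theorem lemma3p2:
  fixes M :: "'a measure" and X :: "'a \<Rightarrow> real"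
    and I J :: "real set" and h :: "real \<Rightarrow> real" and c :: real
  assumes "prob_space M"
    and "X \<in> borel_measurable M"
    and "is_interval I"
    and "\<forall>\<omega>\<in>space M. X \<omega> \<in> I"
    and "h ` I \<subseteq> J"
    and "jump_regular I h"
    and "has_nondec_upper_tail I h"
    and "c = tail_threshold I h"
    and "\<exists>a\<in>I. a < c" and "\<exists>b\<in>I. c < b"
  shows "(\<forall>y. y \<ge> h_star I h c \<longrightarrow>
            measure M {\<omega>\<in>space M. h_tilde I h c (X \<omega>) \<le> y}
              = measure M {\<omega>\<in>space M. h (X \<omega>) \<le> y})
         \<and> measure M {\<omega>\<in>space M. h_tilde I h c (X \<omega>) \<le> h_star I h c}
              = measure M {\<omega>\<in>space M. h (X \<omega>) \<le> h_star I h c}"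
proof -
  obtain b where "b \<in> I" and "c < b" using assms(10) by blast
  then have below: "h x \<le> h_star I h c" if "x \<in> I" and "x < c" for x
    using le_h_star_below_threshold[OF assms(7)] that unfolding assms(8) by blast
  have "{\<omega>\<in>space M. h_tilde I h c (X \<omega>) \<le> y} = {\<omega>\<in>space M. h (X \<omega>) \<le> y}"
    if "h_star I h c \<le> y" for y
    using h_tilde_le_iff[OF below that] assms(4) by blast
  then show ?thesis by simp
qed

end
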